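(* Fix a query-answering mechanism $\mathcal K$. (1) If $(\boldsymbol\varepsilon,\boldsymbol\mu,\mathbf W)$ is semi-balanced and $\pi(\mathbf Q)=\sum_{i=1}^n\mu_i(\mathbf Q)$, then $(\pi,\boldsymbol\varepsilon,\boldsymbol\mu,\mathbf W)$ is balanced. (2) If $(\pi,\boldsymbol\varepsilon,\boldsymbol\mu,\mathbf W)$ is balanced and $\pi'$ is an arbitrage-free price function with $\pi'(\mathbf Q)\ge\pi(\mathbf Q)$ for all queries $\mathbf Q$, then $(\pi',\boldsymbol\varepsilon,\boldsymbol\mu,\mathbf W)$ is balanced.
   Context: Fix a bounded $X\subseteq\mathbb R$; databases are $\mathbf x\in X^n$, and $\mathbf x^{(i)}$ is $\mathbf x$ with the $i$-th coordinate set to $0$. Queries are pairs $\mathbf Q=(\mathbf q,v)$, $\mathbf q\in\mathbb R^n$, $v\in[0,\infty]$. A query-answering mechanism $\mathcal K$ assigns to each query $\mathbf Q$ a map $\mathcal K_{\mathbf Q}$ from databases to real random variables. The privacy loss is $\varepsilon_i(\mathcal K_{\mathbf Q})=\sup_{S,\mathbf x}\left|\log\frac{\Pr[\mathcal K_{\mathbf Q}(\mathbf x)\in S]}{\Pr[\mathcal K_{\mathbf Q}(\mathbf x^{(i)})\in S]}\right|$ (over $\mathbf x\in X^n$, measurable $S\subseteq\mathbb R$). A contract function is a non-decreasing $W_i:[0,\infty]\to[0,\infty]$ with $W_i(0)=0$. A price function is a map $\pi$ from queries to $[0,\infty]$. The determinacy relation $\mathbf S\rightarrow\mathbf Q$ is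 the smallest relation satisfying: (Summation) $\{(\mathbf q_1,v_1),\ldots,(\mathbf q_k,v_k)\}\rightarrow(\sum_j\mathbf q_j,\sum_jv_j)$; (Scalar multiplication) $\{(\mathbf q,v)\}\rightarrow(c\mathbf q,c^2v)$ for $c\in\mathbb R$; (Relaxation) $\{(\mathbf q,v)\}\rightarrow(\mathbf q,v')$ for $v\le v'$; (Transitivity) if $\mathbf S_j\rightarrow\mathbf Q_j$ for all $j$ and $\{\mathbf Q_1,\ldots,\mathbf Q_k\}\rightarrow\mathbf Q$ then $\mathbf S_1\uplus\cdots\uplus\mathbf S_k\rightarrow\mathbf Q$. A function $\mu$ from queries to $[0,\infty]$ is arbitrage-free if for every $m\ge1$, $\{\mathbf Q_1,\ldots,\mathbf Q_m\}\rightarrow\mathbf Q$ implies $\mu(\mathbf Q)\le\sum_j\mu(\mathbf Q_j)$. Micro-payments $\mu_i$ (functions from queries to $[0,\infty]$) are: fair if $q_i=0$ implies $\mu_i(\mathbf q,v)=0$; micro arbitrage-free if $\mu_i$ is arbitrage-free; compensating for $W_i$ if $\mu_i(\mathbf Q)\ge W_i(\varepsilon_i(\mathcal K_{\mathbf Q}))$ for all $\mathbf Q$; cost-recovering for $\pi$ if $\pi(\mathbf Q)\ge\sum_i\mu_i(\mathbf Q)$ for all $\mathbf Q$. $(\boldsymbol\varepsilon,\boldsymbol\mu,\mathbf W)$ is semi-balanced if every $\mu_i$ is fair, micro arbitrage-free and compensating for $W_i$. $(\pi,\boldsymbol\varepsilon,\boldsymbol\mu,\mathbf W)$ is balanced if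 $\pi$ is arbitrage-free and the $\mu_i$ are fair, micro arbitrage-free, cost-recovering for $\pi$ and compensating for the $W_i$. *)

theory Defs
  imports "HOL-Probability.Probability" "HOL-Library.Multiset"
begin

text \<open>Databases are functions 'n => real (n = CARD('n)); a query is a pair (q, v)
  with q in R^n and v in [0,infinity].\<close>

type_synonym 'n query = "('n \<Rightarrow> real) \<times> ennreal"

type_synonym 'n mechanism = "'n query \<Rightarrow> ('n \<Rightarrow> real) \<Rightarrow> real measure"

definition databases :: "real set \<Rightarrow> ('n \<Rightarrow> real) set" where
  "databases X = {x. \<forall>j. x j \<in> X}"

definition is_mechanism :: "'n mechanism \<Rightarrow> bool" where
  "is_mechanism K \<longleftrightarrow> (\<forall>Q x. prob_space (K Q x) \<and> sets (K Q x) = sets borel)"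

definition abs_log_ratio :: "real \<Rightarrow> real \<Rightarrow> ennreal" where
  "abs_log_ratio a b = (if a = b then 0 else if a = 0 \<or> b = 0 then \<infinity> else ennreal \<bar>ln (a / b)\<bar>)"

definition privacy_loss :: "real set \<Rightarrow> 'n mechanism \<Rightarrow> 'n \<Rightarrow> 'n query \<Rightarrow> ennreal" where
  "privacy_loss X K i Q =
     (SUP p \<in> databases X \<times> sets borel.
        abs_log_ratio (measure (K Q (fst p)) (snd p)) (measure (K Q ((fst p)(i := 0))) (snd p)))"

definition contract_function :: "(ennreal \<Rightarrow> ennreal) \<Rightarrow> bool" where
  "contract_function W \<longleftrightarrow> mono W \<and> W 0 = 0"

inductive determines :: "'n query multiset \<Rightarrow> 'n query \<Rightarrow> bool" where
  summation: "Qs \<noteq> [] \<Longrightarrow>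
     determines (mset Qs) ((\<lambda>j. \<Sum>Q\<leftarrow>Qs. fst Q j), (\<Sum>Q\<leftarrow>Qs. snd Q))"
| scalar: "determines {#(q, v)#} ((\<lambda>j. c * q j), ennreal (c\<^sup>2) * v)"
| relax: "v \<le> v' \<Longrightarrow> determines {#(q, v)#} (q, v')"
| trans: "Ps \<noteq> [] \<Longrightarrow> (\<forall>p\<in>set Ps. determines (fst p) (snd p)) \<Longrightarrow>
     determines (mset (map snd Ps)) Q \<Longrightarrow> determines (\<Sum>p\<leftarrow>Ps. fst p) Q"

definition arbitrage_free :: "('n query \<Rightarrow> ennreal) \<Rightarrow> bool" where
  "arbitrage_free \<mu> \<longleftrightarrow>
     (\<forall>M Q. M \<noteq> {#} \<longrightarrow> determines M Q \<longrightarrow> \<mu> Q \<le> (\<Sum>R\<in>#M. \<mu> R))"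

definition fair :: "'n \<Rightarrow> ('n query \<Rightarrow> ennreal) \<Rightarrow> bool" where
  "fair i \<mu> \<longleftrightarrow> (\<forall>q v. q i = 0 \<longrightarrow> \<mu> (q, v) = 0)"

definition compensating :: "real set \<Rightarrow> 'n mechanism \<Rightarrow> 'n \<Rightarrow> ('n query \<Rightarrow> ennreal)
    \<Rightarrow> (ennreal \<Rightarrow> ennreal) \<Rightarrow> bool" where
  "compensating X K i \<mu> W \<longleftrightarrow> (\<forall>Q. \<mu> Q \<ge> W (privacy_loss X K i Q))"

definition cost_recovering :: "('n::finite \<Rightarrow> 'n query \<Rightarrow> ennreal) \<Rightarrow> ('n query \<Rightarrow> ennreal) \<Rightarrow> bool" where
  "cost_recovering \<mu> \<pi> \<longleftrightarrow> (\<forall>Q. \<pi> Q \<ge> (\<Sum>i\<in>UNIV. \<mu> i Q))"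

definition semi_balanced :: "real set \<Rightarrow> 'n mechanism \<Rightarrow> ('n \<Rightarrow> 'n query \<Rightarrow> ennreal)
    \<Rightarrow> ('n \<Rightarrow> ennreal \<Rightarrow> ennreal) \<Rightarrow> bool" where
  "semi_balanced X K \<mu> W \<longleftrightarrow>
     (\<forall>i. fair i (\<mu> i) \<and> arbitrage_free (\<mu> i) \<and> compensating X K i (\<mu> i) (W i))"

definition balanced :: "real set \<Rightarrow> 'n::finite mechanism \<Rightarrow> ('n query \<Rightarrow> ennreal)
    \<Rightarrow> ('n \<Rightarrow> 'n query \<Rightarrow> ennreal) \<Rightarrow> ('n \<Rightarrow> ennreal \<Rightarrow> ennreal) \<Rightarrow> bool" where
  "balanced X K \<pi> \<mu> W \<longleftrightarrow> arbitrage_free \<pi> \<and> cost_recovering \<mu> \<pi> \<and>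
     (\<forall>i. fair i (\<mu> i) \<and> arbitrage_free (\<mu> i) \<and> compensating X K i (\<mu> i) (W i))"

end

theory Submission
  imports Defs
begin

text \<open>Summing the micro-payments preserves arbitrage-freeness, since the sum over the
  owners commutes with the sum over the purchased queries; raising the price of a balanced
  scheme to another arbitrage-free price cannot break cost recovery.\<close>

lemma sum_mset_sum_swap:
  fixes f :: "'a \<Rightarrow> 'b \<Rightarrow> ennreal"
  shows "(\<Sum>R\<in>#M. \<Sum>i\<in>A. f i R) = (\<Sum>i\<in>A. \<Sum>R\<in>#M. f i R)"
  by (induction M) (auto simp: sum.distrib)

lemma arbitrage_free_sum:
  fixes \<mu> :: "'i \<Rightarrow> 'n query \<Rightarrow> ennreal"
  assumes "\<And>i. i \<in> A \<Longrightarrow> arbitrage_free (\<mu> i)"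
  shows "arbitrage_free (\<lambda>Q. \<Sum>i\<in>A. \<mu> i Q)"
  unfolding arbitrage_free_def
proof (intro allI impI)
  fix M and Q :: "'n query"
  assume "M \<noteq> {#}" and "determines M Q"
  have "\<mu> i Q \<le> (\<Sum>R\<in>#M. \<mu> i R)" if "i \<in> A" for i
    using assms[OF that] \<open>M \<noteq> {#}\<close> \<open>determines M Q\<close> unfolding arbitrage_free_def by blast
  then have "(\<Sum>i\<in>A. \<mu> i Q) \<le> (\<Sum>i\<in>A. \<Sum>R\<in>#M. \<mu> i R)"
    by (rule sum_mono)
  then show "(\<Sum>i\<in>A. \<mu> i Q) \<le> (\<Sum>R\<in>#M. \<Sum>i\<in>A. \<mu> i R)"
    by (simp add: sum_mset_sum_swap)
qed

lemma cost_recovering_mono: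
  assumes "cost_recovering \<mu> \<pi>" and "\<And>Q. \<pi> Q \<le> \<pi>' Q"
  shows "cost_recovering \<mu> \<pi>'"
  using assms order_trans unfolding cost_recovering_def by blast

lemma balanced_iff_semi_balanced:
  "balanced X K \<pi> \<mu> W \<longleftrightarrow>
     arbitrage_free \<pi> \<and> cost_recovering \<mu> \<pi> \<and> semi_balanced X K \<mu> W"
  unfolding balanced_def semi_balanced_def by blast

theorem proposition11:
  fixes X :: "real set" and K :: "('n::finite) mechanism"
    and \<mu> :: "'n \<Rightarrow> 'n query \<Rightarrow> ennreal" and W :: "'n \<Rightarrow> ennreal \<Rightarrow> ennreal"
  assumes "bounded X" and "is_mechanism K" and "\<forall>i. contract_function (W i)"
  shows "(\<forall>\<pi>. semi_balanced X K \<mu> W \<longrightarrow> (\<forall>Q. \<pi> Q = (\<Sum>i\<in>UNIV. \<mu> i Q))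
              \<longrightarrow> balanced X K \<pi> \<mu> W)
       \<and> (\<forall>\<pi> \<pi>'. balanced X K \<pi> \<mu> W \<longrightarrow> arbitrage_free \<pi>' \<longrightarrow> (\<forall>Q. \<pi>' Q \<ge> \<pi> Q)
              \<longrightarrow> balanced X K \<pi>' \<mu> W)"
proof (intro conjI allI impI)
  fix \<pi> :: "'n query \<Rightarrow> ennreal"
  assume semi: "semi_balanced X K \<mu> W" and "\<forall>Q. \<pi> Q = (\<Sum>i\<in>UNIV. \<mu> i Q)"
  then have \<pi>_def: "\<pi> = (\<lambda>Q. \<Sum>i\<in>UNIV. \<mu> i Q)" by auto
  have "arbitrage_free \<pi>"
    unfolding \<pi>_def using semi by (intro arbitrage_free_sum) (simp add: semi_balanced_def)
  moreover have "cost_recovering \<mu> \<pi>"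
    unfolding \<pi>_def cost_recovering_def by simp
  ultimately show "balanced X K \<pi> \<mu> W"
    using semi balanced_iff_semi_balanced by blast
next
  fix \<pi> \<pi>' :: "'n query \<Rightarrow> ennreal"
  assume "balanced X K \<pi> \<mu> W" and "arbitrage_free \<pi>'" and "\<forall>Q. \<pi> Q \<le> \<pi>' Q"
  then show "balanced X K \<pi>' \<mu> W"
    using cost_recovering_mono balanced_iff_semi_balanced by metis
qed

end
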